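(* Let $\mathbb{X},\mathbb{Y}$ be real Banach spaces of dimension greater than $1$, and let $\mathcal{F}$ be a family of norm one operators in $\mathbb{L}(\mathbb{X},\mathbb{Y})$. Then the pair $(\mathbb{X},\mathbb{Y})$ has uniform sBPBp with respect to $\mathcal{F}$ if and only if for every $\epsilon>0$, \[\sup\{\|Tz\|: T\in\mathcal{F},\ z\in D(T,\epsilon)\}<1,\qquad\text{where } D(T,\epsilon)=S_{\mathbb{X}}\setminus\bigcup_{x\in M_T}B(x,\epsilon).\]
   Context: $S_{\mathbb{X}}$ is the unit sphere, $B(x,r)$ the open ball of centre $x$ and radius $r$, and $M_T=\{x\in S_{\mathbb{X}}:\|Tx\|=\|T\|\}$. The pair $(\mathbb{X},\mathbb{Y})$ has uniform sBPBp with respect to $\mathcal{F}$ if for every $\epsilon>0$ there exists $\eta(\epsilon)>0$ such that whenever $T\in\mathcal{F}$ and $x_0\in S_{\mathbb{X}}$ satisfy $\|Tx_0\|>1-\eta(\epsilon)$, there exists $x_1\in S_{\mathbb{X}}$ with $\|Tx_1\|=1$ and $\|x_1-x_0\|<\epsilon$. *)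

theory Defs
  imports "HOL-Analysis.Analysis" "HOL-Library.Extended_Real"
begin

definition norm_attain_set :: "('a::real_normed_vector \<Rightarrow>\<^sub>L 'b::real_normed_vector) \<Rightarrow> 'a set" where
  "norm_attain_set T = {x. norm x = 1 \<and> norm (blinfun_apply T x) = norm T}"

definition D_set :: "('a::real_normed_vector \<Rightarrow>\<^sub>L 'b::real_normed_vector) \<Rightarrow> real \<Rightarrow> 'a set" where
  "D_set T \<epsilon> = sphere 0 1 - (\<Union>x\<in>norm_attain_set T. ball x \<epsilon>)"

definition uniform_sBPBp :: "('a::real_normed_vector \<Rightarrow>\<^sub>L 'b::real_normed_vector) set \<Rightarrow> bool" where
  "uniform_sBPBp F \<longleftrightarrow>
     (\<forall>\<epsilon>>0. \<exists>\<eta>>0. \<forall>T\<in>F. \<forall>x0. norm x0 = 1 \<and> norm (blinfun_apply T x0) > 1 - \<eta> \<longrightarrow>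
        (\<exists>x1. norm x1 = 1 \<and> norm (blinfun_apply T x1) = 1 \<and> norm (x1 - x0) < \<epsilon>))"

end

theory Submission
  imports Defs
begin

text \<open>For a norm one operator T, a unit vector lies outside D(T,\<epsilon>) exactly when it is
  \<epsilon>-close to a point where T attains its norm. So the uniform sBPBp says precisely that
  every T in F is bounded by some r < 1 on D(T,\<epsilon>), uniformly in T, which is the supremum
  condition.\<close>

lemma SUP_ereal_less_ereal_iff:
  fixes f :: "'a \<Rightarrow> real"
  shows "(SUP x\<in>A. ereal (f x)) < ereal c \<longleftrightarrow> (\<exists>d<c. \<forall>x\<in>A. f x \<le> d)"
proof
  assume "(SUP x\<in>A. ereal (f x)) < ereal c"
  then obtain d :: real where d: "(SUP x\<in>A. ereal (f x)) < ereal d" "d < c"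
    by (metis ereal_dense2 less_ereal.simps(1))
  have "\<forall>x\<in>A. f x \<le> d"
    using order.strict_trans1[OF SUP_upper d(1)] by (simp add: less_imp_le)
  with d(2) show "\<exists>d<c. \<forall>x\<in>A. f x \<le> d" by blast
next
  assume "\<exists>d<c. \<forall>x\<in>A. f x \<le> d"
  then obtain d where "d < c" "\<forall>x\<in>A. f x \<le> d" by blast
  then have "(SUP x\<in>A. ereal (f x)) \<le> ereal d" by (intro SUP_least) simp
  also have "\<dots> < ereal c" using \<open>d < c\<close> by simp
  finally show "(SUP x\<in>A. ereal (f x)) < ereal c" .
qed

lemma mem_D_set_iff:
  assumes "norm T = 1"
  shows "z \<in> D_set T \<epsilon> \<longleftrightarrow>
    norm z = 1 \<and> \<not> (\<exists>x. norm x = 1 \<and> norm (blinfun_apply T x) = 1 \<and> norm (x - z) < \<epsilon>)"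
  using assms unfolding D_set_def norm_attain_set_def by (auto simp: dist_norm)

lemma uniform_sBPBp_iff_uniformly_below_one_on_D_set:
  assumes "\<forall>T\<in>F. norm T = 1"
  shows "uniform_sBPBp F \<longleftrightarrow>
    (\<forall>\<epsilon>>0. \<exists>r<1. \<forall>T\<in>F. \<forall>z\<in>D_set T \<epsilon>. norm (blinfun_apply T z) \<le> r)"
proof (intro iffI allI impI)
  fix \<epsilon> :: real
  assume "uniform_sBPBp F" "\<epsilon> > 0"
  then obtain \<eta> where "\<eta> > 0" and close: "\<forall>T\<in>F. \<forall>x0. norm x0 = 1 \<and> norm (blinfun_apply T x0) > 1 - \<eta> \<longrightarrow>
      (\<exists>x1. norm x1 = 1 \<and> norm (blinfun_apply T x1) = 1 \<and> norm (x1 - x0) < \<epsilon>)"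
    unfolding uniform_sBPBp_def by blast
  have "norm (blinfun_apply T z) \<le> 1 - \<eta>" if "T \<in> F" "z \<in> D_set T \<epsilon>" for T z
    using that close assms mem_D_set_iff[of T z \<epsilon>] by (meson not_le)
  with \<open>\<eta> > 0\<close> show "\<exists>r<1. \<forall>T\<in>F. \<forall>z\<in>D_set T \<epsilon>. norm (blinfun_apply T z) \<le> r"
    by (intro exI[of _ "1 - \<eta>"]) auto
next
  assume below: "\<forall>\<epsilon>>0. \<exists>r<1. \<forall>T\<in>F. \<forall>z\<in>D_set T \<epsilon>. norm (blinfun_apply T z) \<le> r"
  show "uniform_sBPBp F"
    unfolding uniform_sBPBp_def
  proof (intro allI impI)
    fix \<epsilon> :: real
    assume "\<epsilon> > 0"
    then obtain r where "r < 1" and r: "\<forall>T\<in>F. \<forall>z\<in>D_set T \<epsilon>. norm (blinfun_apply T z) \<le> r"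
      using below by blast
    have "\<exists>x1. norm x1 = 1 \<and> norm (blinfun_apply T x1) = 1 \<and> norm (x1 - x0) < \<epsilon>"
      if "T \<in> F" "norm x0 = 1" "norm (blinfun_apply T x0) > r" for T x0
      using that r assms mem_D_set_iff[of T x0 \<epsilon>] by (meson not_le)
    with \<open>r < 1\<close> show "\<exists>\<eta>>0. \<forall>T\<in>F. \<forall>x0. norm x0 = 1 \<and> norm (blinfun_apply T x0) > 1 - \<eta> \<longrightarrow>
        (\<exists>x1. norm x1 = 1 \<and> norm (blinfun_apply T x1) = 1 \<and> norm (x1 - x0) < \<epsilon>)"
      by (intro exI[of _ "1 - r"]) auto
  qed
qed

theorem theorem2p11:
  fixes F :: "('a::banach \<Rightarrow>\<^sub>L 'b::banach) set"
  assumes dimX: "\<exists>u v::'a. independent {u, v} \<and> u \<noteq> v"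
    and dimY: "\<exists>u v::'b. independent {u, v} \<and> u \<noteq> v"
    and normF: "\<forall>T\<in>F. norm T = 1"
  shows "uniform_sBPBp F \<longleftrightarrow>
    (\<forall>\<epsilon>>0. (SUP p\<in>{(T, z). T \<in> F \<and> z \<in> D_set T \<epsilon>}. ereal (norm (blinfun_apply (fst p) (snd p)))) < 1)"
proof -
  have "(SUP p\<in>{(T, z). T \<in> F \<and> z \<in> D_set T \<epsilon>}. ereal (norm (blinfun_apply (fst p) (snd p)))) < 1
      \<longleftrightarrow> (\<exists>r<1. \<forall>T\<in>F. \<forall>z\<in>D_set T \<epsilon>. norm (blinfun_apply T z) \<le> r)" for \<epsilon>
    unfolding one_ereal_def SUP_ereal_less_ereal_iff by auto
  then show ?thesis
    using uniform_sBPBp_iff_uniformly_below_one_on_D_set[OF normF] by simp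
qed

end
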